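(* Let $t$ and $\ell$ be positive integers with $\ell<2t$. Then there are only finitely many matroids (up to isomorphism) with the $(t,\ell)$-property.
   Context: A matroid $M$ has the $(t,\ell)$-property if every $t$-element subset of $E(M)$ is contained in both an $\ell$-element circuit and an $\ell$-element cocircuit of $M$. *)

theory Defs
  imports Main
begin

definition matroid :: "'a set \<Rightarrow> ('a set \<Rightarrow> bool) \<Rightarrow> bool" where
  "matroid E indep \<longleftrightarrow>
     finite E \<and>
     indep {} \<and>
     (\<forall>X. indep X \<longrightarrow> X \<subseteq> E) \<and>
     (\<forall>X Y. indep Y \<and> X \<subseteq> Y \<longrightarrow> indep X) \<and>
     (\<forall>X Y. indep X \<and> indep Y \<and> card X < card Y \<longrightarrow>
        (\<exists>y \<in> Y - X. indep (insert y X)))"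

definition basis :: "'a set \<Rightarrow> ('a set \<Rightarrow> bool) \<Rightarrow> 'a set \<Rightarrow> bool" where
  "basis E indep B \<longleftrightarrow> indep B \<and> (\<forall>X. indep X \<and> B \<subseteq> X \<longrightarrow> X = B)"

definition circuit :: "'a set \<Rightarrow> ('a set \<Rightarrow> bool) \<Rightarrow> 'a set \<Rightarrow> bool" where
  "circuit E indep C \<longleftrightarrow> C \<subseteq> E \<and> \<not> indep C \<and> (\<forall>x \<in> C. indep (C - {x}))"

definition dual_indep :: "'a set \<Rightarrow> ('a set \<Rightarrow> bool) \<Rightarrow> 'a set \<Rightarrow> bool" where
  "dual_indep E indep X \<longleftrightarrow> X \<subseteq> E \<and> (\<exists>B. basis E indep B \<and> X \<inter> B = {})"

definition cocircuit :: "'a set \<Rightarrow> ('a set \<Rightarrow> bool) \<Rightarrow> 'a set \<Rightarrow> bool" where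
  "cocircuit E indep C \<longleftrightarrow> circuit E (dual_indep E indep) C"

definition tl_property :: "nat \<Rightarrow> nat \<Rightarrow> 'a set \<Rightarrow> ('a set \<Rightarrow> bool) \<Rightarrow> bool" where
  "tl_property t l E indep \<longleftrightarrow>
     (\<forall>X. X \<subseteq> E \<and> card X = t \<longrightarrow>
        (\<exists>C. X \<subseteq> C \<and> card C = l \<and> circuit E indep C) \<and>
        (\<exists>D. X \<subseteq> D \<and> card D = l \<and> cocircuit E indep D))"

definition matroid_iso :: "'a set \<Rightarrow> ('a set \<Rightarrow> bool) \<Rightarrow> 'b set \<Rightarrow> ('b set \<Rightarrow> bool) \<Rightarrow> bool" where
  "matroid_iso E1 I1 E2 I2 \<longleftrightarrow>
     (\<exists>f. bij_betw f E1 E2 \<and> (\<forall>X. X \<subseteq> E1 \<longrightarrow> (I1 X \<longleftrightarrow> I2 (f ` X))))"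

end

theory Submission
  imports Defs
begin

text \<open>If E is large, it splits into many disjoint t-sets, each contained in an l-circuit; as
  l < 2t these circuits are distinct, so the Erdos-Rado sunflower lemma yields a sunflower of
  t l + 1 of them. Any card K + 1 of its petals form a dependent set, and the kernel K has fewer
  than l elements, so the petals contain t pairwise disjoint circuits. One element from each
  gives a t-set inside an l-cocircuit, which by orthogonality meets every circuit it touches in
  at least two elements; hence 2t \<le> l, a contradiction. So card E is bounded, and a matroid on E
  is isomorphic to one on an initial segment of the naturals below the bound.\<close>

section \<open>Sunflowers\<close>

definition sunflower :: "'a set \<Rightarrow> 'a set set \<Rightarrow> bool" where
  "sunflower K S \<longleftrightarrow> (\<forall>A\<in>S. \<forall>B\<in>S. A \<noteq> B \<longrightarrow> A \<inter> B = K)"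

lemma sunflower_subset: "sunflower K S \<Longrightarrow> T \<subseteq> S \<Longrightarrow> sunflower K T"
  unfolding sunflower_def by blast

lemma sunflower_insert_disjoint:
  "sunflower {} G \<Longrightarrow> A \<inter> \<Union>G = {} \<Longrightarrow> sunflower {} (insert A G)"
  unfolding sunflower_def by (auto simp: Int_commute)

lemma sunflower_insert_image:
  assumes "sunflower K S" "\<And>A. A \<in> S \<Longrightarrow> x \<notin> A"
  shows "sunflower (insert x K) (insert x ` S)"
  unfolding sunflower_def
proof (intro ballI impI)
  fix A' B' assume "A' \<in> insert x ` S" "B' \<in> insert x ` S" "A' \<noteq> B'"
  then obtain A B where "A \<in> S" "B \<in> S" "A \<noteq> B" "A' = insert x A" "B' = insert x B" by blast
  then show "A' \<inter> B' = insert x K" using assms(1) unfolding sunflower_def by auto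
qed

lemma sunflower_kernel_psubset:
  assumes S: "sunflower K S" "2 \<le> card S" and fin: "\<And>B. B \<in> S \<Longrightarrow> finite B"
    and card: "\<And>B. B \<in> S \<Longrightarrow> card B = m" and A: "A \<in> S"
  shows "K \<subset> A"
proof -
  have "\<not> S \<subseteq> {A}"
  proof
    assume "S \<subseteq> {A}"
    then have "card S \<le> 1" using card_mono[of "{A}" S] by simp
    with S(2) show False by simp
  qed
  then obtain B where B: "B \<in> S" "B \<noteq> A" by blast
  then have K: "A \<inter> B = K" using S(1) A unfolding sunflower_def by blast
  have "A \<noteq> K"
  proof
    assume "A = K"
    then have "A \<subseteq> B" using K by blast
    then show False
      using card_subset_eq[OF fin[OF B(1)] \<open>A \<subseteq> B\<close>] card[OF A] card[OF B(1)] B(2) by simp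
  qed
  then show ?thesis using K by blast
qed

lemma sunflower_petals_disjoint:
  assumes "sunflower K S" "G \<subseteq> S" "H \<subseteq> S" "G \<inter> H = {}"
  shows "(\<Union>A\<in>G. A - K) \<inter> (\<Union>A\<in>H. A - K) = {}"
proof -
  have "(A - K) \<inter> (B - K) = {}" if "A \<in> G" "B \<in> H" for A B
  proof -
    have "A \<noteq> B" using that assms(4) by blast
    then have "A \<inter> B = K" using assms(1-3) that unfolding sunflower_def by blast
    then show ?thesis by blast
  qed
  then show ?thesis by blast
qed

lemma disjoint_family_choice:
  assumes "\<And>i j. i \<in> I \<Longrightarrow> j \<in> I \<Longrightarrow> i \<noteq> j \<Longrightarrow> P i \<inter> P j = {}" "\<And>i. i \<in> I \<Longrightarrow> P i \<noteq> {}"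
  obtains r where "inj_on r I" "\<And>i. i \<in> I \<Longrightarrow> r i \<in> P i"
proof -
  define r where "r i = (SOME x. x \<in> P i)" for i
  have r: "r i \<in> P i" if "i \<in> I" for i
    using assms(2)[OF that] unfolding r_def by (simp add: some_in_eq)
  have "inj_on r I"
  proof (rule inj_onI)
    fix i j assume ij: "i \<in> I" "j \<in> I" "r i = r j"
    show "i = j"
    proof (rule ccontr)
      assume "i \<noteq> j"
      then have "P i \<inter> P j = {}" using assms(1) ij(1,2) by simp
      then show False using r[OF ij(1)] r[OF ij(2)] ij(3) by (metis IntI empty_iff)
    qed
  qed
  then show thesis using that r by blast
qed

lemma exists_disjoint_subsets_of_card:
  assumes "finite E" "0 < t" "m * t \<le> card E"
  shows "\<exists>F. card F = m \<and> sunflower {} F \<and> (\<forall>Z\<in>F. Z \<subseteq> E \<and> card Z = t)"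
  using assms(3)
proof (induction m)
  case 0
  show ?case by (intro exI[of _ "{}"]) (simp add: sunflower_def)
next
  case (Suc m)
  then obtain F where F: "card F = m" "sunflower {} F" "\<forall>Z\<in>F. Z \<subseteq> E \<and> card Z = t" by auto
  have "finite F" using F(3) assms(1) by (intro finite_subset[of F "Pow E"]) auto
  have "card (\<Union>F) \<le> (\<Sum>Z\<in>F. card Z)" by (rule card_Union_le_sum_card)
  also have "\<dots> = m * t" using F(1,3) by simp
  finally have "card (\<Union>F) \<le> m * t" .
  moreover have "card (E - \<Union>F) = card E - card (\<Union>F)"
    using F(3) assms(1) by (intro card_Diff_subset) (auto intro: finite_subset)
  ultimately have "t \<le> card (E - \<Union>F)" using Suc.prems by simp
  then obtain Z where Z: "Z \<subseteq> E - \<Union>F" "card Z = t" by (meson obtain_subset_with_card_n)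
  then have "Z \<noteq> {}" using assms(2) by auto
  then have "Z \<notin> F" using Z(1) by blast
  then have "card (insert Z F) = Suc m" using \<open>finite F\<close> F(1) by simp
  moreover have "sunflower {} (insert Z F)" using sunflower_insert_disjoint[OF F(2)] Z(1) by blast
  ultimately show ?case using F(3) Z by (intro exI[of _ "insert Z F"]) blast
qed

lemma exists_maximal_disjoint_subfamily:
  assumes "finite F"
  obtains G where "G \<subseteq> F" "sunflower {} G" "\<And>A. A \<in> F \<Longrightarrow> A \<noteq> {} \<Longrightarrow> A \<inter> \<Union>G \<noteq> {}"
proof -
  let ?\<G> = "{G. G \<subseteq> F \<and> sunflower {} G}"
  have "finite ?\<G>" by (rule finite_subset[where B="Pow F"]) (use assms in auto)
  moreover have "{} \<in> ?\<G>" by (simp add: sunflower_def)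
  ultimately obtain G where "G \<in> ?\<G>" and maximal: "\<forall>G'\<in>?\<G>. G \<subseteq> G' \<longrightarrow> G = G'"
    using finite_has_maximal[of ?\<G>] by blast
  then have G: "G \<subseteq> F" "sunflower {} G" by simp_all
  have "A \<inter> \<Union>G \<noteq> {}" if A: "A \<in> F" "A \<noteq> {}" for A
  proof
    assume disj: "A \<inter> \<Union>G = {}"
    have "insert A G \<in> ?\<G>" using G(1) A(1) sunflower_insert_disjoint[OF G(2) disj] by simp
    then have "G = insert A G" using maximal by (simp add: subset_insertI)
    then show False using A(2) disj by blast
  qed
  then show thesis using that G by blast
qed

lemma card_le_card_mult_max_degree:
  assumes "finite U" and meets: "\<And>A. A \<in> F \<Longrightarrow> A \<inter> U \<noteq> {}"
    and degree: "\<And>x. x \<in> U \<Longrightarrow> card {A\<in>F. x \<in> A} \<le> k"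
  shows "card F \<le> card U * k"
proof -
  have "(\<Union>x\<in>U. {A\<in>F. x \<in> A}) = F" using meets by blast
  then have "card F \<le> (\<Sum>x\<in>U. card {A\<in>F. x \<in> A})"
    using card_UN_le[OF assms(1), of "\<lambda>x. {A\<in>F. x \<in> A}"] by (simp only:)
  also have "\<dots> \<le> (\<Sum>x\<in>U. k)" using degree by (rule sum_mono)
  finally show ?thesis by simp
qed

lemma family_without_large_disjoint_subfamily_has_popular_element:
  assumes "finite F" and fin: "\<And>A. A \<in> F \<Longrightarrow> finite A" and card: "\<And>A. A \<in> F \<Longrightarrow> card A = Suc m"
    and no_disjoint: "\<And>G. G \<subseteq> F \<Longrightarrow> sunflower {} G \<Longrightarrow> card G < q"
    and large: "q * Suc m * k < card F"
  shows "\<exists>x. k < card {A\<in>F. x \<in> A}"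
proof (rule ccontr)
  assume "\<not> ?thesis"
  then have degree: "\<And>x. card {A\<in>F. x \<in> A} \<le> k" by (simp add: not_less)
  obtain G where G: "G \<subseteq> F" "sunflower {} G" and meets: "\<And>A. A \<in> F \<Longrightarrow> A \<noteq> {} \<Longrightarrow> A \<inter> \<Union>G \<noteq> {}"
    using exists_maximal_disjoint_subfamily[OF assms(1)] by blast
  have finG: "finite G" using G(1) assms(1) finite_subset by blast
  have "card (\<Union>G) \<le> (\<Sum>A\<in>G. card A)" by (rule card_Union_le_sum_card)
  also have "\<dots> = (\<Sum>A\<in>G. Suc m)" using G(1) card by (intro sum.cong) auto
  also have "\<dots> = card G * Suc m" by simp
  finally have "card (\<Union>G) \<le> card G * Suc m" .
  moreover have "card F \<le> card (\<Union>G) * k"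
  proof (rule card_le_card_mult_max_degree)
    show "finite (\<Union>G)" using finG G(1) fin by blast
    show "A \<inter> \<Union>G \<noteq> {}" if "A \<in> F" for A
      using meets[OF that] card[OF that] by (metis card.empty nat.distinct(1))
  qed (rule degree)
  ultimately have "card F \<le> card G * Suc m * k" using mult_le_mono1 le_trans by blast
  also have "\<dots> \<le> q * Suc m * k"
    using no_disjoint[OF G] by (intro mult_le_mono1) simp
  finally show False using large by simp
qed

lemma sunflower_lemma:
  assumes "finite F" "\<And>A. A \<in> F \<Longrightarrow> finite A" "\<And>A. A \<in> F \<Longrightarrow> card A = m"
    and "q ^ m * fact m < card F"
  shows "\<exists>S K. S \<subseteq> F \<and> card S = q \<and> sunflower K S"
  using assms
proof (induction m arbitrary: F)
  case 0
  then have "F \<subseteq> {{}}" using card_0_eq by blast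
  then have "card F \<le> 1" using card_mono[of "{{}}" F] by simp
  with "0.prems"(4) show ?case by simp
next
  case (Suc m)
  show ?case
  proof (cases "\<exists>G \<subseteq> F. sunflower {} G \<and> q \<le> card G")
    case True
    then obtain G where G: "G \<subseteq> F" "sunflower {} G" "q \<le> card G" by blast
    obtain S where "S \<subseteq> G" "card S = q" "finite S"
      using G(3) by (rule obtain_subset_with_card_n)
    then have "S \<subseteq> F \<and> card S = q \<and> sunflower {} S" using G(1) sunflower_subset[OF G(2)] by blast
    then show ?thesis by blast
  next
    case False
    have "q * Suc m * (q ^ m * fact m) < card F" using Suc.prems(4) by (simp add: algebra_simps)
    moreover have "\<And>G. G \<subseteq> F \<Longrightarrow> sunflower {} G \<Longrightarrow> card G < q" using False by auto
    ultimately obtain x where x: "q ^ m * fact m < card {A\<in>F. x \<in> A}"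
      using family_without_large_disjoint_subfamily_has_popular_element[OF Suc.prems(1-3)] by blast
    define F' where "F' = (\<lambda>A. A - {x}) ` {A\<in>F. x \<in> A}"
    have "inj_on (\<lambda>A. A - {x}) {A\<in>F. x \<in> A}"
      by (rule inj_onI) (metis (no_types, lifting) insert_Diff mem_Collect_eq)
    then have "q ^ m * fact m < card F'" using x unfolding F'_def by (simp add: card_image)
    moreover have "finite F'" using Suc.prems(1) unfolding F'_def by simp
    moreover have "\<And>A. A \<in> F' \<Longrightarrow> finite A" "\<And>A. A \<in> F' \<Longrightarrow> card A = m"
      using Suc.prems(2,3) unfolding F'_def by auto
    ultimately obtain S' K where S': "S' \<subseteq> F'" "card S' = q" "sunflower K S'"
      using Suc.IH by metis
    have x_notin: "\<And>A. A \<in> S' \<Longrightarrow> x \<notin> A" using S'(1) unfolding F'_def by blast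
    have "inj_on (insert x) S'"
    proof (rule inj_onI)
      fix A B assume "A \<in> S'" "B \<in> S'" "insert x A = insert x B"
      then show "A = B" using x_notin by (metis Diff_insert_absorb)
    qed
    then have "card (insert x ` S') = q" using S'(2) by (simp add: card_image)
    moreover have "insert x ` S' \<subseteq> F"
    proof
      fix A' assume "A' \<in> insert x ` S'"
      then obtain A where "A \<in> F" "x \<in> A" "A' = insert x (A - {x})"
        using S'(1) unfolding F'_def by blast
      then show "A' \<in> F" by (simp add: insert_absorb)
    qed
    ultimately show ?thesis using sunflower_insert_image[OF S'(3) x_notin] by blast
  qed
qed

section \<open>Finite matroids\<close>

locale finite_matroid =
  fixes E :: "'a set" and indep :: "'a set \<Rightarrow> bool"
  assumes is_matroid: "matroid E indep"
begin

lemma finite_ground: "finite E"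
  using is_matroid by (simp add: matroid_def)

lemma indep_empty: "indep {}"
  using is_matroid by (simp add: matroid_def)

lemma indep_subset_ground: "indep X \<Longrightarrow> X \<subseteq> E"
  using is_matroid by (simp add: matroid_def)

lemma indep_subset: "indep Y \<Longrightarrow> X \<subseteq> Y \<Longrightarrow> indep X"
  using is_matroid unfolding matroid_def by blast

lemma indep_augment: "indep X \<Longrightarrow> indep Y \<Longrightarrow> card X < card Y \<Longrightarrow> \<exists>y\<in>Y - X. indep (insert y X)"
  using is_matroid unfolding matroid_def by blast

lemma indep_finite: "indep X \<Longrightarrow> finite X"
  using finite_subset[OF indep_subset_ground finite_ground] .

lemma circuit_subset_ground: "circuit E indep C \<Longrightarrow> C \<subseteq> E"
  unfolding circuit_def by blast

lemma circuit_finite: "circuit E indep C \<Longrightarrow> finite C"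
  using finite_subset[OF circuit_subset_ground finite_ground] .

lemma finite_circuits: "finite {C. circuit E indep C}"
  by (rule finite_subset[of _ "Pow E"]) (use circuit_subset_ground finite_ground in auto)

lemma circuit_nonempty: "circuit E indep C \<Longrightarrow> C \<noteq> {}"
  using indep_empty unfolding circuit_def by blast

lemma circuit_not_subset_indep: "circuit E indep C \<Longrightarrow> indep J \<Longrightarrow> \<not> C \<subseteq> J"
  using indep_subset unfolding circuit_def by blast

lemma extend_to_maximal_indep:
  assumes "indep I" "I \<subseteq> A"
  obtains J where "I \<subseteq> J" "J \<subseteq> A" "indep J" "\<And>y. y \<in> A - J \<Longrightarrow> \<not> indep (insert y J)"
proof -
  let ?\<J> = "{J. I \<subseteq> J \<and> J \<subseteq> A \<and> indep J}"
  have "finite ?\<J>"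
    by (rule finite_subset[where B="Pow E"]) (use indep_subset_ground finite_ground in auto)
  moreover have "I \<in> ?\<J>" using assms by simp
  ultimately obtain J where "J \<in> ?\<J>" and maximal: "\<forall>J'\<in>?\<J>. J \<subseteq> J' \<longrightarrow> J = J'"
    using finite_has_maximal[of ?\<J>] by blast
  then have J: "I \<subseteq> J" "J \<subseteq> A" "indep J" by simp_all
  have "\<not> indep (insert y J)" if "y \<in> A - J" for y
  proof
    assume "indep (insert y J)"
    then have "insert y J \<in> ?\<J>" using J that by blast
    then have "J = insert y J" using maximal by (simp add: subset_insertI)
    then show False using that by blast
  qed
  then show thesis using that J by blast
qed

lemma dependent_contains_circuit:
  assumes "Y \<subseteq> E" "\<not> indep Y"
  obtains C where "C \<subseteq> Y" "circuit E indep C"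
  using assms
proof (induction "card Y" arbitrary: Y rule: less_induct)
  case less
  show ?case
  proof (cases "\<forall>x\<in>Y. indep (Y - {x})")
    case True
    then have "circuit E indep Y" using less.prems(2,3) unfolding circuit_def by blast
    then show ?thesis using less.prems(1) by blast
  next
    case False
    then obtain x where x: "x \<in> Y" "\<not> indep (Y - {x})" by blast
    have "card (Y - {x}) < card Y"
      using finite_subset[OF less.prems(2) finite_ground] x(1) by (rule card_Diff1_less)
    then show ?thesis using less.hyps[of "Y - {x}"] less.prems x(2) by blast
  qed
qed

lemma basis_if_card_ge_basis:
  assumes B: "basis E indep B" and J: "indep J" "card B \<le> card J"
  shows "basis E indep J"
  unfolding basis_def
proof (intro conjI allI impI)
  fix X assume X: "indep X \<and> J \<subseteq> X"
  show "X = J"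
  proof (rule ccontr)
    assume "X \<noteq> J"
    then have "card J < card X" using X indep_finite psubset_card_mono by blast
    then obtain y where "y \<in> X - B" "indep (insert y B)"
      using indep_augment B J(2) X unfolding basis_def by (meson le_less_trans)
    then show False using B unfolding basis_def by blast
  qed
qed (rule J(1))

lemma cocircuit_meets_basis:
  "cocircuit E indep D \<Longrightarrow> basis E indep B \<Longrightarrow> D \<inter> B \<noteq> {}"
  unfolding cocircuit_def circuit_def dual_indep_def by blast

lemma cocircuit_minus_point_avoids_basis:
  "cocircuit E indep D \<Longrightarrow> e \<in> D \<Longrightarrow> \<exists>B. basis E indep B \<and> B \<inter> D \<subseteq> {e}"
  unfolding cocircuit_def circuit_def dual_indep_def by blast

text \<open>Extend C - {e} to a maximal independent J inside E - D. Every basis meets D, so J is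
  not a basis and a basis avoiding D - {e} augments J by some y; maximality forces y = e,
  but then C \<subseteq> insert y J.\<close>
lemma circuit_cocircuit_inter_not_singleton:
  assumes C: "circuit E indep C" and D: "cocircuit E indep D"
  shows "C \<inter> D \<noteq> {e}"
proof
  assume CD: "C \<inter> D = {e}"
  obtain B where B: "basis E indep B" "B \<inter> D \<subseteq> {e}"
    using cocircuit_minus_point_avoids_basis[OF D] CD by blast
  have C_minus: "indep (C - {e})" "C - {e} \<subseteq> E - D"
    using C CD unfolding circuit_def by auto
  obtain J where J: "C - {e} \<subseteq> J" "J \<subseteq> E - D" "indep J"
    and maximal: "\<And>y. y \<in> E - D - J \<Longrightarrow> \<not> indep (insert y J)"
    using extend_to_maximal_indep[OF C_minus] by blast
  have "\<not> basis E indep J" using cocircuit_meets_basis[OF D] J(2) by blast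
  then have "card J < card B" using basis_if_card_ge_basis[OF B(1) J(3)] by linarith
  then obtain y where y: "y \<in> B - J" "indep (insert y J)"
    using indep_augment[OF J(3)] B(1) unfolding basis_def by blast
  show False
  proof (cases "y \<in> D")
    case True
    then have "C \<subseteq> insert y J" using y(1) B(2) J(1) by blast
    then show False using circuit_not_subset_indep[OF C y(2)] by blast
  next
    case False
    then show False using maximal y indep_subset_ground B(1) unfolding basis_def by blast
  qed
qed

lemma circuit_cocircuit_inter_card:
  assumes "circuit E indep C" "cocircuit E indep D" "C \<inter> D \<noteq> {}"
  shows "2 \<le> card (C \<inter> D)"
proof -
  have "finite (C \<inter> D)" using circuit_finite[OF assms(1)] by simp
  then have "card (C \<inter> D) \<noteq> 0" "card (C \<inter> D) \<noteq> 1"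
    using assms(3) circuit_cocircuit_inter_not_singleton[OF assms(1,2)]
    by (auto simp: card_1_singleton_iff)
  then show ?thesis by linarith
qed

text \<open>K is independent, so extend it to a maximal independent J inside K \<union> Y. As J contains no
  circuit, it misses a point of every petal; the petals are disjoint, so card J < card Y,
  and Y would augment J.\<close>
lemma sunflower_petals_dependent:
  assumes circuits: "\<And>C. C \<in> G \<Longrightarrow> circuit E indep C" and kernel: "\<And>C. C \<in> G \<Longrightarrow> K \<subset> C"
    and G: "sunflower K G" "card K < card G"
  shows "\<not> indep (\<Union>C\<in>G. C - K)"
proof
  define Y where "Y = (\<Union>C\<in>G. C - K)"
  assume "indep (\<Union>C\<in>G. C - K)"
  then have Y: "indep Y" unfolding Y_def .
  obtain C0 where C0: "C0 \<in> G" using G(2) by fastforce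
  then obtain x where x: "x \<in> C0" "x \<notin> K" using kernel by blast
  have "indep (C0 - {x})" using circuits[OF C0] x(1) unfolding circuit_def by blast
  moreover have "K \<subseteq> C0 - {x}" using kernel[OF C0] x(2) by blast
  ultimately have "indep K" by (rule indep_subset)
  then obtain J where J: "K \<subseteq> J" "J \<subseteq> K \<union> Y" "indep J"
    and maximal: "\<And>y. y \<in> K \<union> Y - J \<Longrightarrow> \<not> indep (insert y J)"
    using extend_to_maximal_indep[of K "K \<union> Y"] by blast
  have meets: "(C - K) \<inter> (Y - J) \<noteq> {}" if "C \<in> G" for C
  proof
    assume "(C - K) \<inter> (Y - J) = {}"
    moreover have "C - K \<subseteq> Y" using that unfolding Y_def by blast
    ultimately have "C \<subseteq> J" using J(1) by blast
    then show False using circuit_not_subset_indep[OF circuits[OF that] J(3)] by blast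
  qed
  have disjoint: "(C - K) \<inter> (Y - J) \<inter> ((C' - K) \<inter> (Y - J)) = {}"
    if "C \<in> G" "C' \<in> G" "C \<noteq> C'" for C C'
  proof -
    have "C \<inter> C' = K" using G(1) that unfolding sunflower_def by blast
    then show ?thesis by blast
  qed
  obtain r where r: "inj_on r G" "\<And>C. C \<in> G \<Longrightarrow> r C \<in> (C - K) \<inter> (Y - J)"
    using disjoint_family_choice[of G "\<lambda>C. (C - K) \<inter> (Y - J)", OF disjoint meets] by blast
  have fin: "finite Y" "finite K" using indep_finite Y \<open>indep K\<close> by auto
  have "r ` G \<subseteq> Y - J" using r(2) by blast
  then have "card G \<le> card (Y - J)" using card_inj_on_le[OF r(1)] fin by simp
  moreover have "card J + card (Y - J) \<le> card K + card Y"
  proof -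
    have "card J + card (Y - J) = card (J \<union> (Y - J))"
      using fin J(2) finite_subset by (intro card_Un_disjoint[symmetric]) auto
    also have "\<dots> \<le> card (K \<union> Y)" using J(2) fin by (intro card_mono) auto
    also have "\<dots> \<le> card K + card Y" by (rule card_Un_le)
    finally show ?thesis .
  qed
  ultimately have "card J < card Y" using G(2) by linarith
  then obtain y where "y \<in> Y - J" "indep (insert y J)" using indep_augment[OF J(3) Y] by blast
  then show False using maximal by blast
qed

lemma disjoint_circuits_in_sunflower:
  assumes "\<And>C. C \<in> G \<Longrightarrow> circuit E indep C" "\<And>C. C \<in> G \<Longrightarrow> K \<subset> C" "sunflower K G"
    and "finite G" "n * (card K + 1) \<le> card G"
  shows "\<exists>D. finite D \<and> card D = n \<and> sunflower {} D \<and>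
           (\<forall>C\<in>D. circuit E indep C \<and> C \<subseteq> (\<Union>A\<in>G. A - K))"
  using assms
proof (induction n arbitrary: G)
  case 0
  show ?case by (intro exI[of _ "{}"]) (simp add: sunflower_def)
next
  case (Suc n)
  have "card K + 1 \<le> card G" using Suc.prems(5) by simp
  then obtain G1 where G1: "G1 \<subseteq> G" "card G1 = card K + 1" "finite G1"
    by (rule obtain_subset_with_card_n)
  have dep: "\<not> indep (\<Union>A\<in>G1. A - K)"
  proof (rule sunflower_petals_dependent)
    show "sunflower K G1" using sunflower_subset[OF Suc.prems(3) G1(1)] .
  qed (use Suc.prems(1,2) G1 in auto)
  have "(\<Union>A\<in>G1. A - K) \<subseteq> E" using Suc.prems(1) G1(1) circuit_subset_ground by blast
  then obtain C0 where C0: "C0 \<subseteq> (\<Union>A\<in>G1. A - K)" "circuit E indep C0"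
    using dependent_contains_circuit[OF _ dep] by blast
  have "\<exists>D. finite D \<and> card D = n \<and> sunflower {} D \<and>
          (\<forall>C\<in>D. circuit E indep C \<and> C \<subseteq> (\<Union>A\<in>G - G1. A - K))"
  proof (rule Suc.IH)
    show "sunflower K (G - G1)" using sunflower_subset[OF Suc.prems(3)] by blast
    show "n * (card K + 1) \<le> card (G - G1)"
      using Suc.prems(5) G1 card_Diff_subset[OF G1(3) G1(1)] by simp
  qed (use Suc.prems(1,2,4) in auto)
  then obtain D where D: "finite D" "card D = n" "sunflower {} D"
    "\<And>C. C \<in> D \<Longrightarrow> circuit E indep C" "\<Union>D \<subseteq> (\<Union>A\<in>G - G1. A - K)"
    by blast
  have "(\<Union>A\<in>G1. A - K) \<inter> (\<Union>A\<in>G - G1. A - K) = {}"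
    by (rule sunflower_petals_disjoint[OF Suc.prems(3) G1(1)]) auto
  moreover have "C0 \<inter> \<Union>D \<subseteq> (\<Union>A\<in>G1. A - K) \<inter> (\<Union>A\<in>G - G1. A - K)"
    using C0(1) D(5) by (rule Int_mono)
  ultimately have C0_disjoint: "C0 \<inter> \<Union>D = {}" by blast
  have "C0 \<notin> D"
  proof
    assume "C0 \<in> D"
    then have "C0 \<subseteq> \<Union>D" by (rule Union_upper)
    then show False using C0_disjoint circuit_nonempty[OF C0(2)] by blast
  qed
  have "(\<Union>A\<in>G1. A - K) \<subseteq> (\<Union>A\<in>G. A - K)" "(\<Union>A\<in>G - G1. A - K) \<subseteq> (\<Union>A\<in>G. A - K)"
    using G1(1) by (intro UN_mono; auto)+
  then have "C0 \<subseteq> (\<Union>A\<in>G. A - K)" "\<Union>D \<subseteq> (\<Union>A\<in>G. A - K)"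
    using C0(1) D(5) by (auto intro: subset_trans)
  then have "\<forall>C\<in>insert C0 D. circuit E indep C \<and> C \<subseteq> (\<Union>A\<in>G. A - K)"
    using C0(2) D(4) by (simp add: Sup_le_iff)
  moreover have "card (insert C0 D) = Suc n" using D(1,2) \<open>C0 \<notin> D\<close> by simp
  moreover have "sunflower {} (insert C0 D)" using sunflower_insert_disjoint[OF D(3) C0_disjoint] .
  ultimately show ?case using D(1) by (intro exI[of _ "insert C0 D"]) simp
qed

section \<open>Matroids with the (t, l)-property\<close>

lemma tl_property_no_disjoint_circuits:
  assumes tl: "tl_property t l E indep" and "l < 2 * t"
    and D: "card D = t" "sunflower {} D" "\<And>C. C \<in> D \<Longrightarrow> circuit E indep C"
  shows False
proof -
  have "finite D" using D(1) \<open>l < 2 * t\<close> by (intro card_ge_0_finite) simp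
  obtain r where r: "inj_on r D" "\<And>C. C \<in> D \<Longrightarrow> r C \<in> C"
    using disjoint_family_choice[of D id] D(2,3) circuit_nonempty unfolding sunflower_def by auto
  have "r ` D \<subseteq> E" "card (r ` D) = t"
    using r D(1,3) circuit_subset_ground by (auto simp: card_image)
  then obtain Dc where Dc: "r ` D \<subseteq> Dc" "card Dc = l" "cocircuit E indep Dc"
    using tl unfolding tl_property_def by blast
  have "finite Dc"
    using Dc(3) finite_ground finite_subset unfolding cocircuit_def circuit_def by blast
  have "2 * t \<le> (\<Sum>C\<in>D. card (C \<inter> Dc))"
  proof -
    have "2 \<le> card (C \<inter> Dc)" if "C \<in> D" for C
      using circuit_cocircuit_inter_card[OF D(3)[OF that] Dc(3)] r(2)[OF that] Dc(1) that by blast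
    then have "(\<Sum>C\<in>D. 2) \<le> (\<Sum>C\<in>D. card (C \<inter> Dc))" by (rule sum_mono)
    then show ?thesis using D(1) by (simp add: mult.commute)
  qed
  also have "\<dots> = card (\<Union>C\<in>D. C \<inter> Dc)"
    using \<open>finite D\<close> \<open>finite Dc\<close> D(2) unfolding sunflower_def
    by (intro card_UN_disjoint[symmetric]) auto
  also have "\<dots> \<le> l" using \<open>finite Dc\<close> Dc(2) by (metis card_mono UN_least inf_le2)
  finally show False using \<open>l < 2 * t\<close> by linarith
qed

lemma tl_property_many_circuits:
  assumes tl: "tl_property t l E indep" and "l < 2 * t" "m * t \<le> card E"
  shows "m \<le> card {C. circuit E indep C \<and> card C = l}"
proof -
  obtain F where F: "card F = m" "sunflower {} F" "\<forall>Z\<in>F. Z \<subseteq> E \<and> card Z = t"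
    using exists_disjoint_subsets_of_card[OF finite_ground _ assms(3)] assms(2) by auto
  then obtain c where c: "\<And>Z. Z \<in> F \<Longrightarrow> Z \<subseteq> c Z \<and> card (c Z) = l \<and> circuit E indep (c Z)"
    using tl unfolding tl_property_def by metis
  have "inj_on c F"
  proof (rule inj_onI)
    fix Z Z' assume Z: "Z \<in> F" "Z' \<in> F" "c Z = c Z'"
    show "Z = Z'"
    proof (rule ccontr)
      assume "Z \<noteq> Z'"
      then have "Z \<inter> Z' = {}" using F(2) Z(1,2) unfolding sunflower_def by blast
      moreover have "Z \<union> Z' \<subseteq> c Z" using c[OF Z(1)] c[OF Z(2)] Z(3) by simp
      moreover have "finite (c Z)" using c[OF Z(1)] circuit_finite by blast
      ultimately have "card Z + card Z' \<le> l"
        using c[OF Z(1)] card_mono[of "c Z" "Z \<union> Z'"] finite_subset[of _ "c Z"]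
        by (simp add: card_Un_disjoint)
      then show False using F(3) Z(1,2) \<open>l < 2 * t\<close> by simp
    qed
  qed
  moreover have "c ` F \<subseteq> {C. circuit E indep C \<and> card C = l}" using c by blast
  moreover have "finite {C. circuit E indep C \<and> card C = l}"
    using finite_circuits by (rule rev_finite_subset) blast
  ultimately show ?thesis using card_inj_on_le F(1) by blast
qed

lemma tl_property_card_bound:
  assumes tl: "tl_property t l E indep" and "0 < l" "l < 2 * t"
  shows "card E < ((t * l + 1) ^ l * fact l + 1) * t"
proof (rule ccontr)
  define \<C> where "\<C> = {C. circuit E indep C \<and> card C = l}"
  have \<C>: "\<And>C. C \<in> \<C> \<Longrightarrow> circuit E indep C" "\<And>C. C \<in> \<C> \<Longrightarrow> card C = l"
    unfolding \<C>_def by simp_all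
  assume "\<not> ?thesis"
  then have "(t * l + 1) ^ l * fact l + 1 \<le> card \<C>"
    using tl_property_many_circuits[OF tl \<open>l < 2 * t\<close>] unfolding \<C>_def by (simp add: not_less)
  then have "(t * l + 1) ^ l * fact l < card \<C>" by simp
  moreover have "finite \<C>" using finite_circuits unfolding \<C>_def by (rule rev_finite_subset) blast
  ultimately obtain S K where S: "S \<subseteq> \<C>" "card S = t * l + 1" "sunflower K S"
    using sunflower_lemma[OF \<open>finite \<C>\<close> circuit_finite[OF \<C>(1)] \<C>(2)] by blast
  have S_circuits: "\<And>C. C \<in> S \<Longrightarrow> circuit E indep C" and S_card: "\<And>C. C \<in> S \<Longrightarrow> card C = l"
    using S(1) \<C> by blast+
  have "finite S" using S(1) \<open>finite \<C>\<close> by (rule finite_subset)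
  have "2 \<le> card S" using S(2) assms(2,3) by (simp add: Suc_le_eq)
  then have kernel: "\<And>C. C \<in> S \<Longrightarrow> K \<subset> C"
    using sunflower_kernel_psubset[OF S(3)] circuit_finite[OF S_circuits] S_card by blast
  obtain C where C: "C \<in> S" using \<open>2 \<le> card S\<close> by fastforce
  have "card K < l"
    using psubset_card_mono[OF circuit_finite[OF S_circuits[OF C]] kernel[OF C]] S_card[OF C]
    by simp
  then have "t * (card K + 1) \<le> t * l" by (intro mult_le_mono2) simp
  then have "t * (card K + 1) \<le> card S" using S(2) by simp
  then obtain D where "card D = t" "sunflower {} D" "\<And>C. C \<in> D \<Longrightarrow> circuit E indep C"
    using disjoint_circuits_in_sunflower[OF S_circuits kernel S(3) \<open>finite S\<close>] by blast
  then show False using tl_property_no_disjoint_circuits[OF tl \<open>l < 2 * t\<close>] by blast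
qed

end

section \<open>Isomorphic copies on an initial segment of the naturals\<close>

lemma matroid_image:
  assumes "matroid E indep" "inj_on f E"
  shows "matroid (f ` E) (\<lambda>Y. \<exists>X. indep X \<and> Y = f ` X)"
proof -
  interpret finite_matroid E indep by (rule finite_matroid.intro) fact
  have inj: "inj_on f X" if "indep X" for X
    using assms(2) indep_subset_ground[OF that] by (rule inj_on_subset)
  show ?thesis
    unfolding matroid_def
  proof (intro conjI allI impI)
    show "finite (f ` E)" using finite_ground by simp
    show "\<exists>X. indep X \<and> {} = f ` X" using indep_empty by auto
    fix Y assume "\<exists>X. indep X \<and> Y = f ` X"
    then show "Y \<subseteq> f ` E" using indep_subset_ground by blast
  next
    fix X Y assume "(\<exists>X. indep X \<and> Y = f ` X) \<and> X \<subseteq> Y"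
    then obtain Y0 where Y0: "indep Y0" "X \<subseteq> f ` Y0" by blast
    then have "X = f ` {x\<in>Y0. f x \<in> X}" by blast
    moreover have "indep {x\<in>Y0. f x \<in> X}" using Y0(1) by (rule indep_subset) blast
    ultimately show "\<exists>X'. indep X' \<and> X = f ` X'" by blast
  next
    fix X Y assume XY: "(\<exists>X'. indep X' \<and> X = f ` X') \<and> (\<exists>X. indep X \<and> Y = f ` X) \<and> card X < card Y"
    then obtain X0 Y0 where X0: "indep X0" "X = f ` X0" and Y0: "indep Y0" "Y = f ` Y0" by blast
    have "card X0 < card Y0" using XY X0 Y0 inj by (simp add: card_image)
    then obtain y where y: "y \<in> Y0 - X0" "indep (insert y X0)"
      using indep_augment X0(1) Y0(1) by blast
    have "f y \<notin> X"
    proof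
      assume "f y \<in> X"
      then have "f y \<in> f ` X0" using X0(2) by simp
      then obtain x where x: "x \<in> X0" "f x = f y" by (metis imageE)
      then have "x = y" using inj_onD[OF inj[OF y(2)] x(2) insertI2 insertI1] by blast
      then show False using x(1) y(1) by simp
    qed
    moreover have "f y \<in> Y" using y(1) Y0(2) by simp
    moreover have "insert (f y) X = f ` insert y X0" using X0(2) by simp
    ultimately show "\<exists>y\<in>Y - X. \<exists>X'. indep X' \<and> insert y X = f ` X'" using y(2) by blast
  qed
qed

lemma matroid_iso_image:
  assumes "matroid E indep" "inj_on f E"
  shows "matroid_iso E indep (f ` E) (\<lambda>Y. \<exists>X. indep X \<and> Y = f ` X)"
  unfolding matroid_iso_def
proof (intro exI[of _ f] conjI allI impI)
  interpret finite_matroid E indep by (rule finite_matroid.intro) fact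
  show "bij_betw f E (f ` E)" using assms(2) by (rule inj_on_imp_bij_betw)
  fix X assume X: "X \<subseteq> E"
  have "X = X'" if "indep X'" "f ` X = f ` X'" for X'
    using inj_on_image_eq_iff[OF assms(2) X indep_subset_ground[OF that(1)]] that(2) by simp
  then show "indep X \<longleftrightarrow> (\<exists>X'. indep X' \<and> f ` X = f ` X')" by blast
qed

lemma matroid_iso_on_lessThan:
  assumes "matroid E indep"
  obtains I' where "matroid {..<card E} I'" "matroid_iso E indep {..<card E} I'"
proof -
  obtain h where h: "bij_betw h E {..<card E}"
    using ex_bij_betw_finite_nat[OF finite_matroid.finite_ground[OF finite_matroid.intro, OF assms]]
    atLeast0LessThan by auto
  then have inj: "inj_on h E" and hE: "h ` E = {..<card E}" by (auto simp: bij_betw_def)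
  show thesis
    using that matroid_image[OF assms inj] matroid_iso_image[OF assms inj] hE by simp
qed

lemma finite_set_predicates_on:
  assumes "finite A"
  shows "finite {P :: 'a set \<Rightarrow> bool. \<forall>X. P X \<longrightarrow> X \<subseteq> A}"
proof (rule finite_subset)
  show "{P. \<forall>X. P X \<longrightarrow> X \<subseteq> A} \<subseteq> (\<lambda>\<S> X. X \<in> \<S>) ` Pow (Pow A)"
  proof
    fix P :: "'a set \<Rightarrow> bool" assume "P \<in> {P. \<forall>X. P X \<longrightarrow> X \<subseteq> A}"
    then have "{X. P X} \<in> Pow (Pow A)" by auto
    moreover have "P = (\<lambda>X. X \<in> {X. P X})" by simp
    ultimately show "P \<in> (\<lambda>\<S> X. X \<in> \<S>) ` Pow (Pow A)" by blast
  qed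
qed (use assms in simp)

theorem corollary3p4:
  fixes t l :: nat
  assumes "0 < t" and "0 < l" and "l < 2 * t"
  shows "\<exists>S :: (nat set \<times> (nat set \<Rightarrow> bool)) set. finite S \<and>
           (\<forall>(E :: 'a set) indep. matroid E indep \<and> tl_property t l E indep \<longrightarrow>
              (\<exists>(E', I') \<in> S. matroid E' I' \<and> matroid_iso E indep E' I'))"
proof -
  define N where "N = ((t * l + 1) ^ l * fact l + 1) * t"
  define S where "S = Pow {..<N} \<times> {I'. \<forall>X. I' X \<longrightarrow> X \<subseteq> {..<N}}"
  have "finite S" unfolding S_def using finite_set_predicates_on by blast
  moreover have "\<exists>(E', I') \<in> S. matroid E' I' \<and> matroid_iso E indep E' I'"
    if m: "matroid E indep" and tl: "tl_property t l E indep" for E :: "'a set" and indep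
  proof -
    obtain I' where I': "matroid {..<card E} I'" "matroid_iso E indep {..<card E} I'"
      using matroid_iso_on_lessThan[OF m] by blast
    have "card E < N" unfolding N_def
      using finite_matroid.tl_property_card_bound[OF finite_matroid.intro, OF m tl assms(2,3)] .
    then have "{..<card E} \<subseteq> {..<N}" by auto
    moreover have "\<And>X. I' X \<Longrightarrow> X \<subseteq> {..<card E}"
      using finite_matroid.indep_subset_ground[OF finite_matroid.intro, OF I'(1)] .
    ultimately have "\<forall>X. I' X \<longrightarrow> X \<subseteq> {..<N}" by (meson order_trans)
    then have "({..<card E}, I') \<in> S" unfolding S_def using \<open>{..<card E} \<subseteq> {..<N}\<close> by simp
    then show ?thesis using I' by blast
  qed
  ultimately show ?thesis by blast
qed

end
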